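(* For every integer $n\ge5$, let $\Delta^3_n$ be the pure $3$-dimensional simplicial complex on the vertex set $\{\pm1,\dots,\pm n\}$ whose facets are the following four-element sets together with their antipodal images (images under $x\mapsto -x$): (a) $\{i,i+1,n-1,n\}$ and $\{-i,-i-1,n-1,n\}$ for $1\le i\le n-3$; (b) $\{1,-(n-2),n-1,n\}$, $\{1,-(n-2),-(n-1),n\}$, $\{1,-(n-2),-(n-1),-n\}$; (c) $\{i,i+1,\ell-2,\ell\}$ and $\{-i,-i-1,\ell-2,\ell\}$ for $5\le \ell\le n$ and $1\le i\le \ell-4$; (d) $\{1,-(\ell-3),\ell-2,\ell\}$, $\{1,-(\ell-3),-(\ell-1),\ell\}$, $\{-(\ell-3),-(\ell-2),-(\ell-1),\ell\}$ for $5\le\ell\le n$; (e) $\{1,2,-3,4\}$, $\{1,2,3,-4\}$, $\{1,-2,3,-4\}$. Then $\Delta^3_n$ (a centrally symmetric simplicial $3$-sphere) is not polytopal: there is no simplicial convex $4$-polytope whose boundary complex is combinatorially isomorphic to $\Delta^3_n$.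
   Context: $\{\Delta^3_n\}$ is Jockusch's family of centrally symmetric cs-$2$-neighborly simplicial $3$-spheres on $2n$ vertices, in the explicit facet description of Novik and Zheng (the facets in (a),(b) form the ball $B^{3,1}_n$). A simplicial $(d-1)$-sphere is polytopal if it is isomorphic to the boundary complex of a simplicial convex $d$-polytope; here $d=4$. *)

theory Defs
  imports "HOL-Analysis.Analysis"
begin

definition jockusch_base_facets :: "int \<Rightarrow> int set set" where
  "jockusch_base_facets n =
     {{i, i+1, n-1, n} | i. 1 \<le> i \<and> i \<le> n-3}
   \<union> {{-i, -i-1, n-1, n} | i. 1 \<le> i \<and> i \<le> n-3}
   \<union> {{1, -(n-2), n-1, n}, {1, -(n-2), -(n-1), n}, {1, -(n-2), -(n-1), -n}}
   \<union> {{i, i+1, l-2, l} | i l. 5 \<le> l \<and> l \<le> n \<and> 1 \<le> i \<and> i \<le> l-4}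
   \<union> {{-i, -i-1, l-2, l} | i l. 5 \<le> l \<and> l \<le> n \<and> 1 \<le> i \<and> i \<le> l-4}
   \<union> (\<Union>l\<in>{5..n}. {{1, -(l-3), l-2, l}, {1, -(l-3), -(l-1), l}, {-(l-3), -(l-2), -(l-1), l}})
   \<union> {{1, 2, -3, 4}, {1, 2, 3, -4}, {1, -2, 3, -4}}"

definition jockusch_facets :: "int \<Rightarrow> int set set" where
  "jockusch_facets n = jockusch_base_facets n \<union> (\<lambda>F. uminus ` F) ` jockusch_base_facets n"

definition jockusch_vertices :: "int \<Rightarrow> int set" where
  "jockusch_vertices n = {x. x \<noteq> 0 \<and> \<bar>x\<bar> \<le> n}"

definition jockusch_faces :: "int \<Rightarrow> int set set" where
  "jockusch_faces n = {S. \<exists>F\<in>jockusch_facets n. S \<subseteq> F}"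

text \<open>Vertices of a polytope and its boundary complex, recorded as the vertex sets
  of its proper faces (the empty face included).\<close>
definition poly_vertices :: "'a::euclidean_space set \<Rightarrow> 'a set" where
  "poly_vertices P = {v. v extreme_point_of P}"

definition boundary_complex :: "'a::euclidean_space set \<Rightarrow> 'a set set" where
  "boundary_complex P = {poly_vertices F | F. F face_of P \<and> F \<noteq> P}"

definition simplicial_polytope :: "int \<Rightarrow> 'a::euclidean_space set \<Rightarrow> bool" where
  "simplicial_polytope d P \<longleftrightarrow> polytope P \<and> aff_dim P = d \<and>
     (\<forall>F. F face_of P \<and> F \<noteq> P \<longrightarrow> (\<exists>m. m simplex F))"

definition polytopal4 :: "'v set \<Rightarrow> 'v set set \<Rightarrow> bool" where
  "polytopal4 V K \<longleftrightarrow> (\<exists>(P :: (real^4) set) f.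
     simplicial_polytope 4 P \<and> bij_betw f V (poly_vertices P) \<and>
     (\<forall>S. S \<subseteq> V \<longrightarrow> (S \<in> K \<longleftrightarrow> f ` S \<in> boundary_complex P)))"

end

(*
  Suppose a simplicial 4-polytope realizes \<Delta>^3_n and look only at the ten vertices
  +-1, ..., +-5.  Sixteen facets of \<Delta>^3_n use no other vertices (types (c) and (d) with
  l = 5, type (e), and their antipodal images), so for every n >= 5 each of them spans a
  supporting hyperplane with the remaining six points strictly on one side.  For the brackets
  [x1 x2 x3 x4 x5] (oriented volumes of 4-simplices) this means [F x] [F y] > 0 whenever x, y
  are outside the facet F.  These sign conditions contradict the three-term Grassmann-Pluecker
  relations [a p q] [a r s] - [a p r] [a q s] + [a p s] [a q r] = 0: once the signs of two
  brackets are fixed, a chain of forced sign deductions ends in a relation whose three terms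
  have the same sign.
*)

theory Submission
  imports Defs
begin

section \<open>Sign propagation for alternating functions\<close>

definition alternating :: "('a list \<Rightarrow> real) \<Rightarrow> bool" where
  "alternating \<phi> \<longleftrightarrow> (\<forall>us a b vs. \<phi> (us @ b # a # vs) = - \<phi> (us @ a # b # vs))"

fun insert_signed :: "'a::linorder \<Rightarrow> 'a list \<Rightarrow> int \<times> 'a list" where
  "insert_signed x [] = (1, [x])"
| "insert_signed x (y # ys) =
     (if x \<le> y then (1, x # y # ys)
      else let (s, zs) = insert_signed x ys in (- s, y # zs))"

fun sort_signed :: "'a::linorder list \<Rightarrow> int \<times> 'a list" where
  "sort_signed [] = (1, [])"
| "sort_signed (x # xs) =
     (let (s, ys) = sort_signed xs; (t, zs) = insert_signed x ys in (s * t, zs))"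

lemma insert_signed_sign: "fst (insert_signed x ys) \<in> {1, -1}"
  by (induction x ys rule: insert_signed.induct) (auto split: prod.split)

lemma sort_signed_sign: "fst (sort_signed xs) \<in> {1, -1}"
proof (induction xs)
  case (Cons x xs)
  obtain s ys where s: "sort_signed xs = (s, ys)" by fastforce
  obtain t zs where t: "insert_signed x ys = (t, zs)" by fastforce
  have "s \<in> {1, -1}" "t \<in> {1, -1}"
    using Cons.IH s insert_signed_sign[of x ys] t by auto
  then show ?case using s t by auto
qed simp

lemma alternating_insert_signed:
  assumes "alternating \<phi>"
  shows "\<phi> (us @ x # ys) = of_int (fst (insert_signed x ys)) * \<phi> (us @ snd (insert_signed x ys))"
proof (induction x ys arbitrary: us rule: insert_signed.induct)
  case (2 x y ys)
  show ?case
  proof (cases "x \<le> y")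
    case False
    obtain s zs where s: "insert_signed x ys = (s, zs)" by fastforce
    have "\<phi> (us @ x # y # ys) = - \<phi> ((us @ [y]) @ x # ys)"
      using assms unfolding alternating_def by (metis append.assoc append_Cons append_Nil)
    also have "\<dots> = - (of_int s * \<phi> (us @ y # zs))"
      using "2.IH"[OF False, of "us @ [y]"] s by simp
    finally show ?thesis using False s by simp
  qed simp
qed simp

lemma alternating_sort_signed:
  assumes "alternating \<phi>"
  shows "\<phi> (us @ xs) = of_int (fst (sort_signed xs)) * \<phi> (us @ snd (sort_signed xs))"
proof (induction xs arbitrary: us)
  case (Cons x xs)
  obtain s ys where s: "sort_signed xs = (s, ys)" by fastforce
  obtain t zs where t: "insert_signed x ys = (t, zs)" by fastforce
  have "\<phi> (us @ x # xs) = of_int s * \<phi> (us @ x # ys)"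
    using Cons.IH[of "us @ [x]"] s by simp
  also have "\<dots> = of_int s * (of_int t * \<phi> (us @ zs))"
    using alternating_insert_signed[OF assms, of us x ys] t by simp
  finally show ?case using s t by simp
qed simp

type_synonym 'a monomial = "int \<times> 'a list \<times> 'a list"

type_synonym 'a sign_table = "('a list \<times> int) list"

fun monomial_value :: "('a list \<Rightarrow> real) \<Rightarrow> 'a monomial \<Rightarrow> real" where
  "monomial_value \<phi> (c, k, l) = of_int c * \<phi> k * \<phi> l"

text \<open>Sorting both label lists gives every bracket a canonical key.\<close>

definition monomial :: "'a::linorder list \<Rightarrow> 'a list \<Rightarrow> 'a monomial" where
  "monomial xs ys = (let (s, k) = sort_signed xs; (t, l) = sort_signed ys in (s * t, k, l))"

fun scale_monomial :: "int \<Rightarrow> 'a monomial \<Rightarrow> 'a monomial" where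
  "scale_monomial t (c, k, l) = (t * c, k, l)"

lemma monomial_value_monomial:
  assumes "alternating \<phi>"
  shows "monomial_value \<phi> (monomial xs ys) = \<phi> xs * \<phi> ys"
  using alternating_sort_signed[OF assms, of "[]" xs] alternating_sort_signed[OF assms, of "[]" ys]
  by (simp add: monomial_def split: prod.split)

lemma monomial_coefficient_nonzero: "fst (monomial xs ys) \<noteq> 0"
  using sort_signed_sign[of xs] sort_signed_sign[of ys]
  by (auto simp: monomial_def split: prod.split)

lemma fst_scale_monomial: "fst (scale_monomial t m) = t * fst m"
  by (cases m) simp

lemma monomial_value_scale: "monomial_value \<phi> (scale_monomial t m) = of_int t * monomial_value \<phi> m"
  by (cases m) simp

fun sound :: "('a list \<Rightarrow> real) \<Rightarrow> 'a sign_table option \<Rightarrow> bool" where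
  "sound \<phi> None \<longleftrightarrow> False"
| "sound \<phi> (Some \<sigma>) \<longleftrightarrow> (\<forall>(k, s) \<in> set \<sigma>. 0 < of_int s * \<phi> k)"

lemma sound_lookup: "sound \<phi> (Some \<sigma>) \<Longrightarrow> map_of \<sigma> k = Some s \<Longrightarrow> 0 < of_int s * \<phi> k"
  by (auto dest: map_of_SomeD)

fun monomial_sign :: "'a sign_table \<Rightarrow> 'a monomial \<Rightarrow> int option" where
  "monomial_sign \<sigma> (c, k, l) =
     (case (map_of \<sigma> k, map_of \<sigma> l) of (Some a, Some b) \<Rightarrow> Some (c * a * b) | _ \<Rightarrow> None)"

lemma monomial_sign_sound:
  assumes "sound \<phi> (Some \<sigma>)" "monomial_sign \<sigma> m = Some t" "fst m \<noteq> 0"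
  shows "0 < of_int t * monomial_value \<phi> m"
proof -
  obtain c k l where m: "m = (c, k, l)" by (cases m)
  obtain a b where ab: "map_of \<sigma> k = Some a" "map_of \<sigma> l = Some b" "t = c * a * b"
    using assms(2) by (auto simp: m split: option.splits)
  have "0 < (of_int c :: real)\<^sup>2" using assms(3) m by simp
  moreover have "0 < (of_int a * \<phi> k) * (of_int b * \<phi> l)"
    using sound_lookup[OF assms(1) ab(1)] sound_lookup[OF assms(1) ab(2)] by simp
  moreover have "of_int t * monomial_value \<phi> m = (of_int c)\<^sup>2 * ((of_int a * \<phi> k) * (of_int b * \<phi> l))"
    by (simp add: m ab(3) power2_eq_square algebra_simps)
  ultimately show ?thesis by simp
qed

fun add_positive :: "'a monomial \<Rightarrow> 'a sign_table option \<Rightarrow> 'a sign_table option" where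
  "add_positive m None = None"
| "add_positive (c, k, l) (Some \<sigma>) =
     (case (map_of \<sigma> k, map_of \<sigma> l) of
        (Some a, Some b) \<Rightarrow> if 0 < c * a * b then Some \<sigma> else None
      | (Some a, None) \<Rightarrow> Some ((l, c * a) # \<sigma>)
      | (None, Some b) \<Rightarrow> Some ((k, c * b) # \<sigma>)
      | (None, None) \<Rightarrow> Some \<sigma>)"

lemma pos_of_pos_mult_square:
  fixes x y :: real
  assumes "0 < x * y\<^sup>2"
  shows "0 < x"
  using assms by (auto simp: zero_less_mult_iff)

lemma sign_of_cofactor:
  fixes x y :: real
  assumes "0 < of_int c * x * y" "0 < of_int a * x"
  shows "0 < of_int (c * a) * y"
proof -
  have "0 < (of_int c * x * y) * (of_int a * x)" using assms by simp
  also have "\<dots> = of_int (c * a) * y * x\<^sup>2" by (simp add: power2_eq_square algebra_simps)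
  finally show ?thesis by (rule pos_of_pos_mult_square)
qed

lemma add_positive_sound:
  assumes "sound \<phi> so" "0 < monomial_value \<phi> m"
  shows "sound \<phi> (add_positive m so)"
proof -
  obtain \<sigma> where \<sigma>: "so = Some \<sigma>" using assms(1) by (cases so) auto
  obtain c k l where m: "m = (c, k, l)" by (cases m)
  have kl: "0 < of_int c * \<phi> k * \<phi> l" and lk: "0 < of_int c * \<phi> l * \<phi> k"
    using assms(2) m by (simp_all add: mult.commute mult.left_commute)
  have known: "0 < of_int s * \<phi> j" if "map_of \<sigma> j = Some s" for j s
    using sound_lookup[OF _ that] assms(1) \<sigma> by simp
  show ?thesis
  proof (cases "map_of \<sigma> k"; cases "map_of \<sigma> l")
    fix a b assume a: "map_of \<sigma> k = Some a" and b: "map_of \<sigma> l = Some b"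
    have "0 < (of_int (c * a) * \<phi> l) * (of_int b * \<phi> l)"
      using sign_of_cofactor[OF kl known[OF a]] known[OF b] by simp
    also have "\<dots> = of_int (c * a * b) * (\<phi> l)\<^sup>2" by (simp add: power2_eq_square algebra_simps)
    finally have "0 < (of_int (c * a * b) :: real)" by (rule pos_of_pos_mult_square)
    then have "0 < c * a * b" by (simp only: of_int_0_less_iff)
    then show ?thesis using assms(1) \<sigma> m a b by simp
  next
    fix a assume a: "map_of \<sigma> k = Some a" and b: "map_of \<sigma> l = None"
    show ?thesis using sign_of_cofactor[OF kl known[OF a]] assms(1) \<sigma> m a b by simp
  next
    fix b assume a: "map_of \<sigma> k = None" and b: "map_of \<sigma> l = Some b"
    show ?thesis using sign_of_cofactor[OF lk known[OF b]] assms(1) \<sigma> m a b by simp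
  qed (use assms(1) \<sigma> m in simp)
qed

lemma fold_add_positive_sound:
  assumes "sound \<phi> so" "\<forall>m \<in> set ms. 0 < monomial_value \<phi> m"
  shows "sound \<phi> (fold add_positive ms so)"
  using assms by (induction ms arbitrary: so) (auto intro: add_positive_sound)

fun add_zero_sum ::
  "'a monomial \<Rightarrow> 'a monomial \<Rightarrow> 'a monomial \<Rightarrow> 'a sign_table option \<Rightarrow> 'a sign_table option"
where
  "add_zero_sum m1 m2 m3 None = None"
| "add_zero_sum m1 m2 m3 (Some \<sigma>) =
     (case (monomial_sign \<sigma> m1, monomial_sign \<sigma> m2, monomial_sign \<sigma> m3) of
        (Some t1, Some t2, None) \<Rightarrow>
          if t1 = t2 then add_positive (scale_monomial (- t1) m3) (Some \<sigma>) else Some \<sigma>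
      | (Some t1, None, Some t3) \<Rightarrow>
          if t1 = t3 then add_positive (scale_monomial (- t1) m2) (Some \<sigma>) else Some \<sigma>
      | (None, Some t2, Some t3) \<Rightarrow>
          if t2 = t3 then add_positive (scale_monomial (- t2) m1) (Some \<sigma>) else Some \<sigma>
      | (Some t1, Some t2, Some t3) \<Rightarrow> if t1 = t2 \<and> t2 = t3 then None else Some \<sigma>
      | _ \<Rightarrow> Some \<sigma>)"

lemma sign_of_third:
  fixes x y z :: real
  assumes "0 < of_int t * x" "0 < of_int t * y" "x + y + z = 0"
  shows "0 < of_int (- t) * z"
proof -
  have "of_int t * x + of_int t * y + of_int t * z = 0"
    using assms(3) by (metis distrib_left mult_zero_right)
  then show ?thesis using assms(1,2) by simp
qed

lemma add_zero_sum_sound: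
  assumes "sound \<phi> so" "fst m1 \<noteq> 0" "fst m2 \<noteq> 0" "fst m3 \<noteq> 0"
    and "monomial_value \<phi> m1 + monomial_value \<phi> m2 + monomial_value \<phi> m3 = 0"
  shows "sound \<phi> (add_zero_sum m1 m2 m3 so)"
proof -
  obtain \<sigma> where \<sigma>: "so = Some \<sigma>" using assms(1) by (cases so) auto
  let ?v = "monomial_value \<phi>"
  have sign: "0 < of_int t * ?v m" if "monomial_sign \<sigma> m = Some t" "fst m \<noteq> 0" for m t
    using monomial_sign_sound[of \<phi> \<sigma> m t] assms(1) \<sigma> that by simp
  have third: "sound \<phi> (add_positive (scale_monomial (- t) m) so)"
    if "0 < of_int t * x" "0 < of_int t * y" "x + y + ?v m = 0" for t x y m
    using add_positive_sound[OF assms(1)] sign_of_third[OF that] by (simp add: monomial_value_scale)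
  have sums: "?v m2 + ?v m3 + ?v m1 = 0" "?v m1 + ?v m3 + ?v m2 = 0" using assms(5) by linarith+
  have rule1: "sound \<phi> (add_positive (scale_monomial (- t) m1) so)"
    if "monomial_sign \<sigma> m2 = Some t" "monomial_sign \<sigma> m3 = Some t" for t
    using third sign assms(3,4) sums(1) that by blast
  have rule2: "sound \<phi> (add_positive (scale_monomial (- t) m2) so)"
    if "monomial_sign \<sigma> m1 = Some t" "monomial_sign \<sigma> m3 = Some t" for t
    using third sign assms(2,4) sums(2) that by blast
  have rule3: "sound \<phi> (add_positive (scale_monomial (- t) m3) so)"
    if "monomial_sign \<sigma> m1 = Some t" "monomial_sign \<sigma> m2 = Some t" for t
    using third sign assms(2,3,5) that by blast
  have conflict: False
    if "monomial_sign \<sigma> m1 = Some t" "monomial_sign \<sigma> m2 = Some t"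
      "monomial_sign \<sigma> m3 = Some t" for t
  proof -
    have "0 < of_int (- t) * ?v m3" "0 < of_int t * ?v m3"
      using sign that assms(2-5) sign_of_third by metis+
    then show False by simp
  qed
  show ?thesis
    using assms(1) rule1 rule2 rule3 conflict unfolding \<sigma>
    by (auto split: option.split)
qed

datatype 'a constraint = Facet "'a list" | Plucker "'a list" 'a 'a 'a 'a

fun satisfies :: "'a list \<Rightarrow> ('a list \<Rightarrow> real) \<Rightarrow> 'a constraint \<Rightarrow> bool" where
  "satisfies V \<phi> (Facet F) \<longleftrightarrow>
     (\<forall>x \<in> set V - set F. \<forall>y \<in> set V - set F. 0 < \<phi> (F @ [x]) * \<phi> (F @ [y]))"
| "satisfies V \<phi> (Plucker a p q r s) \<longleftrightarrow>
     \<phi> (a @ [p, q]) * \<phi> (a @ [r, s]) - \<phi> (a @ [p, r]) * \<phi> (a @ [q, s])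
       + \<phi> (a @ [p, s]) * \<phi> (a @ [q, r]) = 0"

text \<open>A facet constraint is used through the monomials pairing the first outside vertex with
  every other one; they are processed twice, so that a sign known for any of them reaches all.\<close>

fun propagate ::
  "'a::linorder list \<Rightarrow> 'a constraint \<Rightarrow> 'a sign_table option \<Rightarrow> 'a sign_table option"
where
  "propagate V (Facet F) so =
     (let ws = filter (\<lambda>x. x \<notin> set F) V;
          ms = map (\<lambda>y. monomial (F @ [hd ws]) (F @ [y])) (tl ws)
      in fold add_positive (ms @ ms) so)"
| "propagate V (Plucker a p q r s) so =
     (let m1 = monomial (a @ [p, q]) (a @ [r, s]);
          m2 = scale_monomial (- 1) (monomial (a @ [p, r]) (a @ [q, s]));
          m3 = monomial (a @ [p, s]) (a @ [q, r])
      in add_zero_sum m1 m2 m3 so)"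

lemma propagate_sound:
  assumes "alternating \<phi>" "satisfies V \<phi> c" "sound \<phi> so"
  shows "sound \<phi> (propagate V c so)"
proof (cases c)
  case (Facet F)
  define ws where "ws = filter (\<lambda>x. x \<notin> set F) V"
  define ms where "ms = map (\<lambda>y. monomial (F @ [hd ws]) (F @ [y])) (tl ws)"
  have "0 < monomial_value \<phi> (monomial (F @ [hd ws]) (F @ [y]))" if "y \<in> set (tl ws)" for y
  proof -
    have "ws \<noteq> []" using that by auto
    then have "hd ws \<in> set ws" "y \<in> set ws" using that by (auto intro: list.set_sel)
    then have "hd ws \<in> set V - set F" "y \<in> set V - set F" by (auto simp: ws_def)
    then show ?thesis using assms(2) Facet by (simp add: monomial_value_monomial[OF assms(1)])
  qed
  then have "\<forall>m \<in> set (ms @ ms). 0 < monomial_value \<phi> m" by (simp add: ms_def)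
  with assms(3) have "sound \<phi> (fold add_positive (ms @ ms) so)" by (rule fold_add_positive_sound)
  then show ?thesis using Facet by (simp add: ms_def ws_def Let_def)
next
  case (Plucker a p q r s)
  let ?m1 = "monomial (a @ [p, q]) (a @ [r, s])"
  let ?m2 = "scale_monomial (- 1) (monomial (a @ [p, r]) (a @ [q, s]))"
  let ?m3 = "monomial (a @ [p, s]) (a @ [q, r])"
  have nz: "fst ?m1 \<noteq> 0" "fst ?m2 \<noteq> 0" "fst ?m3 \<noteq> 0"
    by (simp_all add: monomial_coefficient_nonzero fst_scale_monomial)
  have "monomial_value \<phi> ?m1 + monomial_value \<phi> ?m2 + monomial_value \<phi> ?m3 = 0"
    using assms(2) Plucker by (simp add: monomial_value_scale monomial_value_monomial[OF assms(1)])
  then show ?thesis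
    using assms(3) Plucker nz by (simp add: Let_def add_zero_sum_sound)
qed

definition refutes :: "'a::linorder list \<Rightarrow> 'a constraint list \<Rightarrow> 'a sign_table \<Rightarrow> bool" where
  "refutes V cs \<sigma> \<longleftrightarrow> fold (propagate V) cs (Some \<sigma>) = None"

theorem refutes_sound:
  assumes "alternating \<phi>" "\<forall>c \<in> set cs. satisfies V \<phi> c" "sound \<phi> (Some \<sigma>)"
  shows "\<not> refutes V cs \<sigma>"
proof -
  have "sound \<phi> (fold (propagate V) cs so)" if "sound \<phi> so" for so
    using assms(2) that by (induction cs arbitrary: so) (auto intro: propagate_sound[OF assms(1)])
  then show ?thesis using assms(3) unfolding refutes_def by (metis sound.simps(1))
qed

lemma alternating_uminus: "alternating \<phi> \<Longrightarrow> alternating (\<lambda>xs. - \<phi> xs)"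
  unfolding alternating_def by (metis minus_minus)

lemma satisfies_uminus: "satisfies V (\<lambda>xs. - \<phi> xs) c \<longleftrightarrow> satisfies V \<phi> c"
  by (cases c) simp_all

lemma satisfies_Facet_nonzero:
  assumes "alternating \<phi>" "satisfies V \<phi> (Facet F)" "x \<in> set V - set F"
  shows "\<phi> (snd (sort_signed (F @ [x]))) \<noteq> 0"
proof -
  have "0 < \<phi> (F @ [x]) * \<phi> (F @ [x])" using assms(2,3) by simp
  then have "\<phi> (F @ [x]) \<noteq> 0" by auto
  then show ?thesis
    using alternating_sort_signed[OF assms(1), of "[]" "F @ [x]"] by (metis append_Nil mult_zero_right)
qed

section \<open>Brackets of five points in \<open>\<real>\<^sup>4\<close>\<close>

definition matrix4 :: "real^4 \<Rightarrow> real^4 \<Rightarrow> real^4 \<Rightarrow> real^4 \<Rightarrow> real^4^4" where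
  "matrix4 u v w z = (\<chi> i. if i = 1 then u else if i = 2 then v else if i = 3 then w else z)"

lemma det_matrix4:
  "det (matrix4 u v w z) =
     (u$1 * v$2 - u$2 * v$1) * (w$3 * z$4 - w$4 * z$3) - (u$1 * v$3 - u$3 * v$1) * (w$2 * z$4 - w$4 * z$2)
   + (u$1 * v$4 - u$4 * v$1) * (w$2 * z$3 - w$3 * z$2) + (u$2 * v$3 - u$3 * v$2) * (w$1 * z$4 - w$4 * z$1)
   - (u$2 * v$4 - u$4 * v$2) * (w$1 * z$3 - w$3 * z$1) + (u$3 * v$4 - u$4 * v$3) * (w$1 * z$2 - w$2 * z$1)"
proof -
  have f1: "finite {2::4, 3, 4}" "1 \<notin> {2::4, 3, 4}" by auto
  have f2: "finite {3::4, 4}" "2 \<notin> {3::4, 4}" by auto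
  have f3: "finite {4::4}" "3 \<notin> {4::4}" by auto
  show ?thesis
    unfolding det_def UNIV_4 sum_over_permutations_insert[OF f1] sum_over_permutations_insert[OF f2]
      sum_over_permutations_insert[OF f3] permutes_sing
    by (simp add: sign_swap_id permutation_swap_id permutation_compose sign_compose sign_id swap_id_eq
        matrix4_def algebra_simps)
qed

lemma det_matrix4_eq_0_dependent:
  assumes "det (matrix4 u v w z) = 0"
  obtains c :: "real^4" where "c \<noteq> 0" "c$1 *\<^sub>R u + c$2 *\<^sub>R v + c$3 *\<^sub>R w + c$4 *\<^sub>R z = 0"
proof -
  have "\<not> invertible (transpose (matrix4 u v w z))"
    using assms by (simp add: invertible_det_nz)
  then obtain c where c: "transpose (matrix4 u v w z) *v c = 0" "c \<noteq> 0"
    by (metis invertible_left_inverse matrix_left_invertible_ker)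
  have "c$1 *\<^sub>R u + c$2 *\<^sub>R v + c$3 *\<^sub>R w + c$4 *\<^sub>R z = 0"
    using c(1) by (simp add: vec_eq_iff matrix_vector_mult_def transpose_def sum_4 matrix4_def algebra_simps)
  with c(2) show thesis by (rule that)
qed

lemma det_matrix4_plucker:
  "det (matrix4 u v p q) * det (matrix4 u v r s) - det (matrix4 u v p r) * det (matrix4 u v q s)
     + det (matrix4 u v p s) * det (matrix4 u v q r) = 0"
  unfolding det_matrix4 by algebra

definition bracket :: "real^4 \<Rightarrow> real^4 \<Rightarrow> real^4 \<Rightarrow> real^4 \<Rightarrow> real^4 \<Rightarrow> real" where
  "bracket a b c d e = det (matrix4 (b - a) (c - a) (d - a) (e - a))"

lemma bracket_swap:
  "bracket b a c d e = - bracket a b c d e"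
  "bracket a c b d e = - bracket a b c d e"
  "bracket a b d c e = - bracket a b c d e"
  "bracket a b c e d = - bracket a b c d e"
  unfolding bracket_def det_matrix4 by (simp_all, algebra+)

lemma bracket_plucker:
  "bracket a b c p q * bracket a b c r s - bracket a b c p r * bracket a b c q s
     + bracket a b c p s * bracket a b c q r = 0"
  unfolding bracket_def by (rule det_matrix4_plucker)

lemma bracket_affine:
  "bracket a b c d ((1 - t) *\<^sub>R x + t *\<^sub>R y) = (1 - t) * bracket a b c d x + t * bracket a b c d y"
  unfolding bracket_def det_matrix4 by simp algebra

lemma bracket_nonzero_below_hyperplane:
  assumes indep: "\<not> affine_dependent {a, b, c, d}" and dist: "distinct [a, b, c, d]"
    and on: "u \<bullet> a = \<beta>" "u \<bullet> b = \<beta>" "u \<bullet> c = \<beta>" "u \<bullet> d = \<beta>"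
    and below: "u \<bullet> x < \<beta>"
  shows "bracket a b c d x \<noteq> 0"
proof
  assume "bracket a b c d x = 0"
  then obtain k :: "real^4" where k: "k \<noteq> 0"
    and comb: "k$1 *\<^sub>R (b - a) + k$2 *\<^sub>R (c - a) + k$3 *\<^sub>R (d - a) + k$4 *\<^sub>R (x - a) = 0"
    unfolding bracket_def by (rule det_matrix4_eq_0_dependent)
  have "k$4 * (u \<bullet> x - \<beta>) =
      u \<bullet> (k$1 *\<^sub>R (b - a) + k$2 *\<^sub>R (c - a) + k$3 *\<^sub>R (d - a) + k$4 *\<^sub>R (x - a))"
    using on by (simp add: inner_add_right inner_diff_right algebra_simps)
  then have k4: "k$4 = 0" using comb below by simp
  have ne: "a \<noteq> b" "a \<noteq> c" "a \<noteq> d" "b \<noteq> c" "b \<noteq> d" "c \<noteq> d"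
    "b \<noteq> a" "c \<noteq> a" "d \<noteq> a" "c \<noteq> b" "d \<noteq> b" "d \<noteq> c" using dist by auto
  define U where
    "U v = (if v = a then - (k$1 + k$2 + k$3) else if v = b then k$1 else if v = c then k$2 else k$3)"
    for v
  have fin: "finite {a, b, c, d}" by simp
  have "affine_dependent {a, b, c, d}"
    unfolding affine_dependent_explicit_finite[OF fin]
  proof (intro exI conjI)
    show "sum U {a, b, c, d} = 0" by (simp add: U_def ne)
    have "k$1 \<noteq> 0 \<or> k$2 \<noteq> 0 \<or> k$3 \<noteq> 0" using k k4 by (simp add: vec_eq_iff forall_4)
    then show "\<exists>v\<in>{a, b, c, d}. U v \<noteq> 0" by (auto simp: U_def ne)
    have "(- (k$1 + k$2 + k$3)) *\<^sub>R a + (k$1 *\<^sub>R b + (k$2 *\<^sub>R c + k$3 *\<^sub>R d))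
        = k$1 *\<^sub>R (b - a) + k$2 *\<^sub>R (c - a) + k$3 *\<^sub>R (d - a) + k$4 *\<^sub>R (x - a)"
      using k4 by (simp add: algebra_simps)
    then show "(\<Sum>v\<in>{a, b, c, d}. U v *\<^sub>R v) = 0"
      using comb by (simp add: U_def ne)
  qed
  with indep show False ..
qed

lemma affine_root_between:
  fixes X Y :: real
  assumes "X * Y < 0"
  obtains t where "0 \<le> t" "t \<le> 1" "(1 - t) * X + t * Y = 0"
proof
  have "X - Y \<noteq> 0" using assms by auto
  then show "(1 - X / (X - Y)) * X + X / (X - Y) * Y = 0" by (simp add: field_simps)
  show "0 \<le> X / (X - Y)" "X / (X - Y) \<le> 1"
    using assms by (auto simp: mult_less_0_iff divide_simps)
qed

lemma bracket_same_side:
  assumes indep: "\<not> affine_dependent {a, b, c, d}" and dist: "distinct [a, b, c, d]"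
    and on: "u \<bullet> a = \<beta>" "u \<bullet> b = \<beta>" "u \<bullet> c = \<beta>" "u \<bullet> d = \<beta>"
    and below: "u \<bullet> x < \<beta>" "u \<bullet> y < \<beta>"
  shows "0 < bracket a b c d x * bracket a b c d y"
proof (rule ccontr)
  let ?g = "bracket a b c d"
  have nonzero: "?g z \<noteq> 0" if "u \<bullet> z < \<beta>" for z
    using bracket_nonzero_below_hyperplane[OF indep dist on that] .
  assume "\<not> 0 < ?g x * ?g y"
  then have "?g x * ?g y < 0"
    using nonzero[OF below(1)] nonzero[OF below(2)] by (auto simp: mult_less_0_iff zero_less_mult_iff)
  then obtain t where t: "0 \<le> t" "t \<le> 1" "(1 - t) * ?g x + t * ?g y = 0"
    by (rule affine_root_between)
  have "(1 - t) *\<^sub>R x + t *\<^sub>R y \<in> {z. u \<bullet> z < \<beta>}"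
    using below t(1,2) by (intro convexD[OF convex_halfspace_lt]) auto
  then have "?g ((1 - t) *\<^sub>R x + t *\<^sub>R y) \<noteq> 0" using nonzero by simp
  with t(3) show False by (simp add: bracket_affine)
qed

section \<open>Facets of simplicial polytopes\<close>

lemma simplicial_polytope_proper_face:
  fixes P :: "'a::euclidean_space set"
  assumes sp: "simplicial_polytope d P" and G: "G face_of P" "G \<noteq> P"
  obtains u \<beta> where "\<not> affine_dependent (poly_vertices G)" "\<forall>v \<in> poly_vertices G. u \<bullet> v = \<beta>"
    "\<forall>v \<in> poly_vertices P - poly_vertices G. u \<bullet> v < \<beta>"
proof -
  have P: "polytope P" using sp unfolding simplicial_polytope_def by blast
  obtain m where "m simplex G" using sp G unfolding simplicial_polytope_def by blast
  then obtain C where C: "\<not> affine_dependent C" "G = convex hull C"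
    unfolding simplex_def by blast
  have vert_G: "poly_vertices G = C"
    unfolding poly_vertices_def C(2) using extreme_point_of_convex_hull_affine_independent[OF C(1)] by blast
  have "G exposed_face_of P"
    using exposed_face_of_polyhedron[OF polytope_imp_polyhedron[OF P]] G(1) by blast
  then obtain u \<beta> where supp: "P \<subseteq> {x. u \<bullet> x \<le> \<beta>}" "G = P \<inter> {x. u \<bullet> x = \<beta>}"
    unfolding exposed_face_of_def by blast
  have "\<forall>v \<in> poly_vertices G. u \<bullet> v = \<beta>"
  proof
    fix v assume "v \<in> poly_vertices G"
    then have "v \<in> G" using hull_subset[of C convex] C(2) vert_G by blast
    then show "u \<bullet> v = \<beta>" using supp(2) by blast
  qed
  moreover have "u \<bullet> v < \<beta>" if v: "v \<in> poly_vertices P - poly_vertices G" for v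
  proof -
    have ext: "v extreme_point_of P" using v unfolding poly_vertices_def by simp
    then have "v \<in> P" unfolding extreme_point_of_def by blast
    show ?thesis
    proof (rule ccontr)
      assume "\<not> u \<bullet> v < \<beta>"
      then have "u \<bullet> v = \<beta>" using supp(1) \<open>v \<in> P\<close> by fastforce
      then have "v \<in> G" using supp(2) \<open>v \<in> P\<close> by blast
      then have "v extreme_point_of G" using extreme_point_of_face[OF G(1)] ext by blast
      then show False using v unfolding poly_vertices_def by blast
    qed
  qed
  ultimately show thesis using C(1) vert_G by (intro that) auto
qed

definition label_bracket :: "('a \<Rightarrow> real^4) \<Rightarrow> 'a list \<Rightarrow> real" where
  "label_bracket f xs = (case xs of [a, b, c, d, e] \<Rightarrow> bracket (f a) (f b) (f c) (f d) (f e) | _ \<Rightarrow> 0)"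

lemma alternating_label_bracket: "alternating (label_bracket f)"
  unfolding alternating_def
proof (intro allI)
  fix us :: "'a list" and a b vs
  consider "us = []" | u1 where "us = [u1]" | u1 u2 where "us = [u1, u2]" | u1 u2 u3 where "us = [u1, u2, u3]"
    | u1 u2 u3 u4 ws where "us = u1 # u2 # u3 # u4 # ws"
    by (metis list.exhaust)
  then show "label_bracket f (us @ b # a # vs) = - label_bracket f (us @ a # b # vs)"
    by cases (auto simp: label_bracket_def split: list.split intro: bracket_swap)
qed

lemma satisfies_Plucker_label_bracket:
  assumes "length a = 3"
  shows "satisfies V (label_bracket f) (Plucker a p q r s)"
proof -
  obtain a1 a2 a3 where "a = [a1, a2, a3]"
    using assms by (auto simp: length_Suc_conv numeral_3_eq_3)
  then show ?thesis by (simp add: label_bracket_def bracket_plucker)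
qed

lemma satisfies_Facet_label_bracket:
  fixes P :: "(real^4) set" and f :: "'v \<Rightarrow> real^4"
  assumes sp: "simplicial_polytope 4 P" and bij: "bij_betw f V (poly_vertices P)"
    and iso: "\<forall>S. S \<subseteq> V \<longrightarrow> (S \<in> K \<longleftrightarrow> f ` S \<in> boundary_complex P)"
    and F: "set F \<in> K" "set F \<subseteq> V" "distinct F" "length F = 4" and vs: "set vs \<subseteq> V"
  shows "satisfies vs (label_bracket f) (Facet F)"
proof -
  obtain a b c d where F_eq: "F = [a, b, c, d]"
    using F(4) by (auto simp: length_Suc_conv numeral_eq_Suc)
  have "f ` set F \<in> boundary_complex P" using iso F(1,2) by blast
  then obtain G where G: "G face_of P" "G \<noteq> P" "poly_vertices G = f ` set F"
    unfolding boundary_complex_def by blast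
  obtain u \<beta> where indep: "\<not> affine_dependent (f ` set F)" and on: "\<forall>v \<in> f ` set F. u \<bullet> v = \<beta>"
    and below: "\<forall>v \<in> poly_vertices P - f ` set F. u \<bullet> v < \<beta>"
    using simplicial_polytope_proper_face[OF sp G(1,2)] unfolding G(3) by metis
  have inj: "inj_on f V" using bij by (rule bij_betw_imp_inj_on)
  have "u \<bullet> f x < \<beta>" if "x \<in> set vs - set F" for x
  proof -
    have "f x \<in> poly_vertices P" using that vs bij by (auto simp: bij_betw_def)
    moreover have "f x \<notin> f ` set F" using that vs F(2) inj by (auto simp: inj_on_def)
    ultimately show ?thesis using below by blast
  qed
  moreover have "distinct [f a, f b, f c, f d]"
    using F(2,3) inj unfolding F_eq by (auto simp: inj_on_def)
  ultimately have "0 < bracket (f a) (f b) (f c) (f d) (f x) * bracket (f a) (f b) (f c) (f d) (f y)"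
    if "x \<in> set vs - set F" "y \<in> set vs - set F" for x y
    using indep on that unfolding F_eq by (intro bracket_same_side[where u = u and \<beta> = \<beta>]) auto
  then show ?thesis unfolding F_eq by (simp add: label_bracket_def)
qed

section \<open>The facets of \<open>\<Delta>\<^sup>3\<^sub>n\<close> on the vertices \<open>\<plusminus>1, \<dots>, \<plusminus>5\<close>\<close>

text \<open>The facets (c) and (d) with \<open>l = 5\<close>, the facets (e), and their antipodal images,
  listed in an order in which a single propagation pass suffices.\<close>

definition low_facets :: "int list list" where
  "low_facets =
     [[1, 2, 3, 5], [1, -2, 3, 5], [-1, -2, 3, 5], [1, -2, -4, 5], [-2, -3, -4, 5],
      [1, 2, -3, 4], [1, 2, 3, -4], [1, -2, 3, -4],
      [1, 2, -3, -5], [-1, 2, -3, -5], [-1, -2, -3, -5], [-1, 2, 4, -5], [2, 3, 4, -5],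
      [-1, -2, 3, -4], [-1, -2, -3, 4], [-1, 2, -3, 4]]"

lemma low_facets_jockusch_faces:
  assumes "5 \<le> n" "F \<in> set low_facets"
  shows "set F \<in> jockusch_faces n"
proof -
  let ?B = "{{1, 2, 3, 5}, {1, -2, 3, 5}, {-1, -2, 3, 5}, {1, -2, -4, 5}, {-2, -3, -4, 5},
             {1, 2, -3, 4}, {1, 2, 3, -4}, {1, -2, 3, -4}} :: int set set"
  have "{1, 2, 3, 5} \<in> {{i, i+1, l-2, l} | i l. 5 \<le> l \<and> l \<le> n \<and> 1 \<le> i \<and> i \<le> l-4}"
    "{-1, -2, 3, 5} \<in> {{-i, -i-1, l-2, l} | i l. 5 \<le> l \<and> l \<le> n \<and> 1 \<le> i \<and> i \<le> l-4}"
    using assms(1) by (intro CollectI exI[of _ 1] exI[of _ 5]; simp)+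
  moreover have "{{1, -2, 3, 5}, {1, -2, -4, 5}, {-2, -3, -4, 5}} \<subseteq>
      (\<Union>l\<in>{5..n}. {{1, -(l-3), l-2, l}, {1, -(l-3), -(l-1), l}, {-(l-3), -(l-2), -(l-1), l}})"
    using assms(1) by (intro order_trans[OF _ UN_upper[of 5]]) simp_all
  ultimately have "?B \<subseteq> jockusch_base_facets n"
    unfolding jockusch_base_facets_def insert_subset Un_iff by simp
  then have "?B \<union> (\<lambda>S. uminus ` S) ` ?B \<subseteq> jockusch_facets n"
    unfolding jockusch_facets_def by (intro Un_mono image_mono)
  moreover have "set F \<in> ?B \<union> (\<lambda>S. uminus ` S) ` ?B"
    using assms(2) unfolding low_facets_def by (simp, elim disjE, simp_all)
  ultimately have "set F \<in> jockusch_facets n" by (rule subsetD)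
  then show ?thesis unfolding jockusch_faces_def by blast
qed

definition low_vertices :: "int list" where
  "low_vertices = [-5, -4, -3, -2, -1, 1, 2, 3, 4, 5]"

text \<open>Grassmann-Pluecker relations used by the propagation, in the order of use; they were
  found by a computer search for a derivation of a contradiction.\<close>

definition low_pluckers :: "int constraint list" where
  "low_pluckers =
     [Plucker [-5, -2, -1] (-4) (-3) 3 5, Plucker [-5, 1, 2] (-4) (-3) 3 5,
      Plucker [-5, 1, 2] (-3) (-1) 3 4, Plucker [-4, -3, -2] (-1) 1 3 5,
      Plucker [-4, -2, -1] (-5) (-3) 3 4, Plucker [-4, 1, 2] (-5) (-2) 3 5,
      Plucker [-3, -2, 5] (-4) (-1) 1 3, Plucker [-2, -1, 3] (-5) (-4) (-3) 4,
      Plucker [1, 2, 5] (-5) (-4) (-2) 3, Plucker [-4, -2, -1] (-5) (-3) 1 5,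
      Plucker [-4, -2, -1] (-5) 1 3 4, Plucker [-4, 1, 2] (-5) (-3) 3 4,
      Plucker [-5, 2, 4] (-4) (-3) (-1) 1, Plucker [-4, 1, 2] (-5) (-3) 3 5,
      Plucker [-4, 1, 2] (-5) 3 4 5, Plucker [-4, 1, 2] (-3) (-2) 3 5,
      Plucker [-4, 1, 2] (-2) 3 4 5, Plucker [-2, -1, 1] (-5) (-4) (-3) 4,
      Plucker [-2, -1, 4] (-5) (-4) (-3) 2, Plucker [-2, -1, 4] (-5) (-4) 1 2,
      Plucker [-2, 1, 2] (-5) (-4) (-3) 4, Plucker [1, 2, 4] (-5) (-4) (-3) (-1),
      Plucker [1, 2, 4] (-5) (-4) (-2) (-1), Plucker [-5, 2, 3] (-4) (-1) 1 4,
      Plucker [-4, -3, -2] (-5) (-1) 3 5, Plucker [-4, -3, -2] (-5) 1 3 5,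
      Plucker [-4, -2, -1] (-5) (-3) 1 3, Plucker [-4, 2, 3] (-5) (-2) (-1) 1,
      Plucker [-2, -1, 1] (-5) (-4) (-3) 5, Plucker [-2, -1, 4] (-5) (-3) 3 5,
      Plucker [1, 2, 4] (-5) (-3) 3 5, Plucker [-5, -4, -2] (-3) 1 2 3,
      Plucker [-5, -4, -2] (-1) 1 2 3, Plucker [-5, -4, 2] (-3) (-2) (-1) 4,
      Plucker [-5, -2, -1] (-4) 1 4 5, Plucker [-5, -2, -1] (-3) 1 2 4,
      Plucker [-5, -2, 2] (-4) (-1) 1 4, Plucker [-5, 1, 2] (-4) (-2) 4 5]"

definition low_constraints :: "int constraint list" where
  "low_constraints = map Facet low_facets @ low_pluckers"

lemma low_constraints_refuted:
  assumes alt: "alternating \<phi>" and sat: "\<forall>c \<in> set low_constraints. satisfies low_vertices \<phi> c"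
    and pos: "0 < \<phi> [-5, 1, 2, 3, 5]"
  shows False
proof -
  have "satisfies low_vertices \<phi> (Facet [1, 2, -3, 4])"
    by (rule bspec[OF sat]) (simp add: low_constraints_def low_facets_def)
  then have "\<phi> (snd (sort_signed ([1, 2, -3, 4] @ [-5]))) \<noteq> 0"
    by (rule satisfies_Facet_nonzero[OF alt]) (simp add: low_vertices_def)
  then consider "0 < of_int 1 * \<phi> [-5, -3, 1, 2, 4]" | "0 < of_int (-1) * \<phi> [-5, -3, 1, 2, 4]"
    by fastforce
  then show False
  proof cases
    case 1
    have "refutes low_vertices low_constraints [([-5, 1, 2, 3, 5], 1), ([-5, -3, 1, 2, 4], 1)]"
      by code_simp
    then show False using refutes_sound[OF alt sat] pos 1 by simp
  next
    case 2
    have "refutes low_vertices low_constraints [([-5, 1, 2, 3, 5], 1), ([-5, -3, 1, 2, 4], -1)]"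
      by code_simp
    then show False using refutes_sound[OF alt sat] pos 2 by simp
  qed
qed

theorem low_constraints_unsatisfiable:
  assumes alt: "alternating \<phi>" and sat: "\<forall>c \<in> set low_constraints. satisfies low_vertices \<phi> c"
  shows False
proof -
  have "satisfies low_vertices \<phi> (Facet [1, 2, 3, 5])"
    by (rule bspec[OF sat]) (simp add: low_constraints_def low_facets_def)
  then have "\<phi> (snd (sort_signed ([1, 2, 3, 5] @ [-5]))) \<noteq> 0"
    by (rule satisfies_Facet_nonzero[OF alt]) (simp add: low_vertices_def)
  then consider "0 < \<phi> [-5, 1, 2, 3, 5]" | "0 < - \<phi> [-5, 1, 2, 3, 5]" by fastforce
  then show False
  proof cases
    case 1
    with alt sat show False by (rule low_constraints_refuted)
  next
    case 2
    with alternating_uminus[OF alt] sat show False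
      by (intro low_constraints_refuted[of "\<lambda>xs. - \<phi> xs"]) (simp_all add: satisfies_uminus)
  qed
qed

theorem mainTheorem7:
  fixes n :: int
  assumes "n \<ge> 5"
  shows "\<not> polytopal4 (jockusch_vertices n) (jockusch_faces n)"
proof
  assume "polytopal4 (jockusch_vertices n) (jockusch_faces n)"
  then obtain P :: "(real^4) set" and f where sp: "simplicial_polytope 4 P"
    and bij: "bij_betw f (jockusch_vertices n) (poly_vertices P)"
    and iso: "\<forall>S. S \<subseteq> jockusch_vertices n \<longrightarrow> (S \<in> jockusch_faces n \<longleftrightarrow> f ` S \<in> boundary_complex P)"
    unfolding polytopal4_def by blast
  have low: "set low_vertices \<subseteq> jockusch_vertices n"
    using assms by (auto simp: low_vertices_def jockusch_vertices_def)
  have facets: "satisfies low_vertices (label_bracket f) (Facet F)" if "F \<in> set low_facets" for F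
  proof (rule satisfies_Facet_label_bracket[OF sp bij iso _ _ _ _ low])
    show "set F \<in> jockusch_faces n" using low_facets_jockusch_faces[OF assms that] .
    have "set F \<subseteq> set low_vertices" "distinct F" "length F = 4"
      using that by (auto simp: low_facets_def low_vertices_def)
    then show "set F \<subseteq> jockusch_vertices n" "distinct F" "length F = 4" using low by auto
  qed
  have "\<forall>c \<in> set low_pluckers. satisfies low_vertices (label_bracket f) c"
    by (simp add: low_pluckers_def satisfies_Plucker_label_bracket del: satisfies.simps)
  with facets have "\<forall>c \<in> set low_constraints. satisfies low_vertices (label_bracket f) c"
    by (auto simp: low_constraints_def simp del: satisfies.simps)
  then show False by (rule low_constraints_unsatisfiable[OF alternating_label_bracket])
qed

end
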